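(* Let $\lambda>1$, $s'\in(0,1]$, $r\in\mathbb{R}$, and consider the system $$x_{n+1}=s'y_n,\qquad y_{n+1}=x_n^{\lambda}e^{r-x_n},\qquad n\ge0,$$ with $(x_0,y_0)\in[0,\infty)^2$; equivalently $x_{n+1}=x_{n-1}^{\lambda}e^{a-x_{n-1}}$ for $n\ge1$ with $x_1=s'y_0$, where $a=r+\ln s'$. Let $f(u)=u^\lambda e^{a-u}$. (a) Every orbit in $[0,\infty)^2$ converges to $(0,0)$ if and only if $a<(\lambda-1)[1-\ln(\lambda-1)]$. (b) Assume $a>(\lambda-1)[1-\ln(\lambda-1)]$, and let $u^*<\bar u$ be the two positive fixed points of $f$. Then the positive fixed points of the scalar equation are $x^*=u^*$ and $\bar x=\bar u$, and every orbit with $(x_0,y_0)\in[0,u^* )\times[0,u^*/s')$ converges to $(0,0)$. (c) Assume $(\lambda-1)[1-\ln(\lambda-1)]<a\le\lambda-(\lambda-1)\ln\lambda$. If $x_0\in[u^*,\bar u]$ or $s'y_0\in[u^*,\bar u]$, then the corresponding orbit does not converge to $(0,0)$. (d) Assume $a>(\lambda-1)[1-\ln(\lambda-1)]$. Then the 2-periodic sequences $\{0,u^*,0,u^*,\dots\}$ and $\{u^*,0,u^*,0,\dots\}$ are solutions of $x_{n+1}=x_{n-1}^{\lambda}e^{a-x_{n-1}}$ and they are unstable: for every $\delta>0$ there are non-negative initial values $(x_0,x_1)$ within distance $\delta$ of $(0,u^* )$ (respectively of $(u^*,0)$) whose solution converges to $0$.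
   Context: For $\lambda>1$ and $a>(\lambda-1)[1-\ln(\lambda-1)]$ the map $f(u)=u^{\lambda}e^{a-u}$ has exactly two positive fixed points $u^*<\lambda-1<\bar u$; $u^*$ is called the Allee fixed point of $f$. *)

theory Defs
  imports "HOL-Analysis.Analysis"
begin

definition fmap :: "real \<Rightarrow> real \<Rightarrow> real \<Rightarrow> real" where
  "fmap lam a u = u powr lam * exp (a - u)"

definition allee_fp :: "real \<Rightarrow> real \<Rightarrow> real" where
  "allee_fp lam a = (THE u. 0 < u \<and> u < lam - 1 \<and> fmap lam a u = u)"

definition upper_fp :: "real \<Rightarrow> real \<Rightarrow> real" where
  "upper_fp lam a = (THE u. lam - 1 < u \<and> fmap lam a u = u)"

fun orbit :: "real \<Rightarrow> real \<Rightarrow> real \<Rightarrow> real \<Rightarrow> real \<Rightarrow> nat \<Rightarrow> real \<times> real" where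
  "orbit lam s r x0 y0 0 = (x0, y0)"
| "orbit lam s r x0 y0 (Suc n) =
     (let p = orbit lam s r x0 y0 n in (s * snd p, fst p powr lam * exp (r - fst p)))"

fun scal :: "real \<Rightarrow> real \<Rightarrow> real \<Rightarrow> real \<Rightarrow> nat \<Rightarrow> real" where
  "scal lam a x0 x1 0 = x0"
| "scal lam a x0 x1 (Suc 0) = x1"
| "scal lam a x0 x1 (Suc (Suc n)) = fmap lam a (scal lam a x0 x1 n)"

definition solves_scalar :: "real \<Rightarrow> real \<Rightarrow> (nat \<Rightarrow> real) \<Rightarrow> bool" where
  "solves_scalar lam a x \<longleftrightarrow> (\<forall>n\<ge>1. x (n + 1) = fmap lam a (x (n - 1)))"

end

theory Submission
  imports Defs "HOL-Real_Asymp.Real_Asymp"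
begin

text \<open>Write f(u) = u exp(g(u)) with g(u) = (lam - 1) ln u + a - u. The positive fixed points
  of f are the zeros of g, which increases up to lam - 1 and decreases afterwards, with maximum
  a - (lam - 1)(1 - ln (lam - 1)); above this threshold there are exactly two, u* < ub.
  The first component of the planar system satisfies x(n+2) = f(x(n)), so its even and odd
  subsequences are orbits of f. Where f(u) < u (everywhere below the threshold, and on (0, u*)
  above it) these orbits decrease to the fixed point 0; a positive fixed point gives an orbit
  that does not decay, and when ub \<le> lam the map f is increasing on [u*, ub], so this interval
  is invariant and keeps orbits away from 0.\<close>

lemma ln_less_minus_one: "0 < x \<Longrightarrow> x \<noteq> 1 \<Longrightarrow> ln x < x - (1::real)"
  using ln_le_minus_one[of x] ln_eq_minus_one[of x] by force

lemma ln_minus_strict_mono: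
  fixes c u v :: real
  assumes "0 < u" "u < v" "v \<le> c"
  shows "c * ln u - u < c * ln v - v"
proof -
  have "ln u - ln v < u / v - 1"
    using ln_less_minus_one[of "u / v"] assms by (simp add: ln_div)
  hence "c * (ln u - ln v) < c * (u / v - 1)"
    using assms by (intro mult_strict_left_mono) auto
  also have "c * (u / v - 1) \<le> u - v"
    using mult_right_mono_neg[of v c "u - v"] assms by (simp add: field_simps)
  finally show ?thesis by (simp add: algebra_simps)
qed

lemma ln_minus_strict_antimono:
  fixes c u v :: real
  assumes "0 < c" "c \<le> u" "u < v"
  shows "c * ln v - v < c * ln u - u"
proof -
  have "ln v - ln u < v / u - 1"
    using ln_less_minus_one[of "v / u"] assms by (simp add: ln_div)
  hence "c * (ln v - ln u) < c * (v / u - 1)"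
    using assms by (intro mult_strict_left_mono) auto
  also have "c * (v / u - 1) \<le> v - u"
    using mult_right_mono[of c u "v - u"] assms by (simp add: field_simps)
  finally show ?thesis by (simp add: algebra_simps)
qed

lemma fmap_zero [simp]: "fmap lam a 0 = 0"
  by (simp add: fmap_def)

lemma fmap_nonneg: "0 \<le> fmap lam a u"
  by (simp add: fmap_def)

lemma isCont_fmap: "0 < u \<Longrightarrow> isCont (fmap lam a) u"
  unfolding fmap_def by (intro continuous_intros) auto

lemma fmap_eq_exp: "0 < u \<Longrightarrow> fmap lam a u = exp (lam * ln u - u + a)"
  by (simp add: fmap_def powr_def exp_add exp_diff)

lemma fmap_mono:
  assumes "0 \<le> u" "u \<le> v" "v \<le> lam"
  shows "fmap lam a u \<le> fmap lam a v"
proof (cases "u = 0 \<or> u = v")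
  case False
  hence "lam * ln u - u < lam * ln v - v"
    using assms by (intro ln_minus_strict_mono) auto
  thus ?thesis
    using False assms by (simp add: fmap_eq_exp)
qed (auto simp: fmap_nonneg)

definition log_growth :: "real \<Rightarrow> real \<Rightarrow> real \<Rightarrow> real" where
  "log_growth lam a u = (lam - 1) * ln u + a - u"

lemma fmap_eq_mult_exp_log_growth: "0 < u \<Longrightarrow> fmap lam a u = u * exp (log_growth lam a u)"
proof -
  assume "0 < u"
  hence "u * exp (log_growth lam a u) = exp (ln u + log_growth lam a u)"
    by (simp add: exp_add)
  thus ?thesis
    using \<open>0 < u\<close> by (simp add: fmap_eq_exp log_growth_def algebra_simps)
qed

lemma fmap_less_self_iff: "0 < u \<Longrightarrow> fmap lam a u < u \<longleftrightarrow> log_growth lam a u < 0"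
  by (simp add: fmap_eq_mult_exp_log_growth)

lemma fmap_eq_self_iff: "0 < u \<Longrightarrow> fmap lam a u = u \<longleftrightarrow> log_growth lam a u = 0"
  by (simp add: fmap_eq_mult_exp_log_growth)

lemma fmap_greater_self_iff: "0 < u \<Longrightarrow> u < fmap lam a u \<longleftrightarrow> 0 < log_growth lam a u"
  by (simp add: fmap_eq_mult_exp_log_growth)

lemma log_growth_strict_mono:
  "lam > 1 \<Longrightarrow> 0 < u \<Longrightarrow> u < v \<Longrightarrow> v \<le> lam - 1 \<Longrightarrow> log_growth lam a u < log_growth lam a v"
  using ln_minus_strict_mono[of u v "lam - 1"] by (simp add: log_growth_def)

lemma log_growth_strict_antimono:
  "lam > 1 \<Longrightarrow> lam - 1 \<le> u \<Longrightarrow> u < v \<Longrightarrow> log_growth lam a v < log_growth lam a u"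
  using ln_minus_strict_antimono[of "lam - 1" u v] by (simp add: log_growth_def)

lemma log_growth_at_peak: "log_growth lam a (lam - 1) = a - (lam - 1) * (1 - ln (lam - 1))"
  by (simp add: log_growth_def algebra_simps)

lemma log_growth_le_peak:
  assumes "lam > 1" "0 < u"
  shows "log_growth lam a u \<le> log_growth lam a (lam - 1)"
  using log_growth_strict_mono[of lam u "lam - 1" a] log_growth_strict_antimono[of lam "lam - 1" u a] assms
  by (cases u "lam - 1" rule: linorder_cases) auto

lemma continuous_on_log_growth: "0 < e \<Longrightarrow> continuous_on {e..M} (log_growth lam a)"
  unfolding log_growth_def by (intro continuous_intros) auto

lemma log_growth_root_below_peak:
  assumes lam: "lam > 1" and peak: "0 \<le> log_growth lam a (lam - 1)"
  obtains u where "0 < u" "u \<le> lam - 1" "log_growth lam a u = 0"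
proof -
  have "filterlim (log_growth lam a) at_bot (at_right 0)"
    unfolding log_growth_def using lam by real_asymp
  hence "eventually (\<lambda>u. log_growth lam a u < 0) (at_right 0)"
    by (simp add: filterlim_at_bot_dense)
  moreover have "eventually (\<lambda>u. 0 < u \<and> u < lam - 1) (at_right 0)"
    using lam by (intro eventually_at_rightI[of 0 "lam - 1"]) auto
  ultimately have "\<exists>e. log_growth lam a e < 0 \<and> 0 < e \<and> e < lam - 1"
    by (intro eventually_happens'[of "at_right 0"]) (auto intro: eventually_conj)
  then obtain e where e: "log_growth lam a e < 0" "0 < e" "e < lam - 1"
    by blast
  then obtain u where "e \<le> u" "u \<le> lam - 1" "log_growth lam a u = 0"
    using IVT'[of "log_growth lam a" e 0 "lam - 1"] peak continuous_on_log_growth by auto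
  with e show ?thesis by (intro that) auto
qed

lemma log_growth_root_above_peak:
  assumes lam: "lam > 1" and peak: "0 \<le> log_growth lam a (lam - 1)"
  obtains u where "lam - 1 \<le> u" "log_growth lam a u = 0"
proof -
  have "filterlim (log_growth lam a) at_bot at_top"
    unfolding log_growth_def using lam by real_asymp
  hence "eventually (\<lambda>u. log_growth lam a u < 0 \<and> lam - 1 < u) at_top"
    by (simp add: filterlim_at_bot_dense eventually_conj)
  then obtain M where M: "log_growth lam a M < 0" "lam - 1 < M"
    using eventually_happens'[of at_top] by force
  then obtain u where "lam - 1 \<le> u" "log_growth lam a u = 0"
    using IVT2'[of "log_growth lam a" M 0 "lam - 1"] peak lam continuous_on_log_growth by auto
  with that show ?thesis by auto
qed

lemma allee_fp_eqI:
  assumes lam: "lam > 1" and u: "0 < u" "u < lam - 1" "fmap lam a u = u"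
  shows "allee_fp lam a = u"
  unfolding allee_fp_def
proof (rule the_equality)
  fix v assume v: "0 < v \<and> v < lam - 1 \<and> fmap lam a v = v"
  have "log_growth lam a u = 0" "log_growth lam a v = 0"
    using u v fmap_eq_self_iff by auto
  thus "v = u"
    using log_growth_strict_mono[of lam u v a] log_growth_strict_mono[of lam v u a] lam u v
    by (cases u v rule: linorder_cases) auto
qed (use u in auto)

lemma upper_fp_eqI:
  assumes lam: "lam > 1" and u: "lam - 1 < u" "fmap lam a u = u"
  shows "upper_fp lam a = u"
  unfolding upper_fp_def
proof (rule the_equality)
  fix v assume v: "lam - 1 < v \<and> fmap lam a v = v"
  have "log_growth lam a u = 0" "log_growth lam a v = 0"
    using lam u v fmap_eq_self_iff by auto
  thus "v = u"
    using log_growth_strict_antimono[of lam u v a] log_growth_strict_antimono[of lam v u a] lam u v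
    by (cases u v rule: linorder_cases) auto
qed (use u in auto)

locale allee_regime =
  fixes lam a :: real
  assumes lam: "lam > 1"
    and above_threshold: "(lam - 1) * (1 - ln (lam - 1)) < a"
begin

lemma log_growth_peak_pos: "0 < log_growth lam a (lam - 1)"
  using above_threshold by (simp add: log_growth_at_peak)

lemma allee_fp: "0 < allee_fp lam a" "allee_fp lam a < lam - 1"
  "fmap lam a (allee_fp lam a) = allee_fp lam a"
proof -
  obtain u where u: "0 < u" "u \<le> lam - 1" "log_growth lam a u = 0"
    using log_growth_root_below_peak lam log_growth_peak_pos by (metis less_imp_le)
  hence "u < lam - 1" "fmap lam a u = u"
    using log_growth_peak_pos fmap_eq_self_iff by (auto simp: order.order_iff_strict)
  with u lam show "0 < allee_fp lam a" "allee_fp lam a < lam - 1"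
    "fmap lam a (allee_fp lam a) = allee_fp lam a"
    using allee_fp_eqI by auto
qed

lemma upper_fp: "lam - 1 < upper_fp lam a" "fmap lam a (upper_fp lam a) = upper_fp lam a"
proof -
  obtain u where u: "lam - 1 \<le> u" "log_growth lam a u = 0"
    using log_growth_root_above_peak lam log_growth_peak_pos by (metis less_imp_le)
  hence "lam - 1 < u" "fmap lam a u = u"
    using log_growth_peak_pos fmap_eq_self_iff lam by (auto simp: order.order_iff_strict)
  with lam show "lam - 1 < upper_fp lam a" "fmap lam a (upper_fp lam a) = upper_fp lam a"
    using upper_fp_eqI by auto
qed

lemma allee_fp_less_upper_fp: "allee_fp lam a < upper_fp lam a"
  using allee_fp upper_fp by linarith

lemma fmap_less_self_below_allee_fp: "0 < u \<Longrightarrow> u < allee_fp lam a \<Longrightarrow> fmap lam a u < u"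
  using log_growth_strict_mono[OF lam, of u "allee_fp lam a" a] allee_fp fmap_eq_self_iff[of "allee_fp lam a"]
    fmap_less_self_iff[of u] by simp

lemma fmap_greater_self_between_fps:
  assumes "allee_fp lam a < u" "u < upper_fp lam a"
  shows "u < fmap lam a u"
proof -
  have "0 < log_growth lam a u"
  proof (cases "u \<le> lam - 1")
    case True
    thus ?thesis
      using log_growth_strict_mono[OF lam, of "allee_fp lam a" u a] allee_fp assms
        fmap_eq_self_iff[of "allee_fp lam a"] by simp
  next
    case False
    thus ?thesis
      using log_growth_strict_antimono[OF lam, of u "upper_fp lam a" a] upper_fp assms lam
        fmap_eq_self_iff[of "upper_fp lam a"] by simp
  qed
  thus ?thesis
    using assms allee_fp fmap_greater_self_iff by auto
qed

lemma positive_fixed_points: "{u. 0 < u \<and> fmap lam a u = u} = {allee_fp lam a, upper_fp lam a}"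
proof (intro equalityI subsetI)
  fix u assume "u \<in> {u. 0 < u \<and> fmap lam a u = u}"
  hence u: "0 < u" "fmap lam a u = u" by auto
  have "u \<noteq> lam - 1"
    using u log_growth_peak_pos fmap_eq_self_iff by auto
  thus "u \<in> {allee_fp lam a, upper_fp lam a}"
    using allee_fp_eqI[OF lam u(1) _ u(2)] upper_fp_eqI[OF lam _ u(2)] by (cases "u < lam - 1") auto
qed (use allee_fp upper_fp lam in auto)

text \<open>The hypothesis says f(lam) \<le> lam.\<close>
lemma upper_fp_le:
  assumes "a \<le> lam - (lam - 1) * ln lam"
  shows "upper_fp lam a \<le> lam"
proof (rule ccontr)
  assume "\<not> upper_fp lam a \<le> lam"
  hence "lam < fmap lam a lam"
    using fmap_greater_self_between_fps allee_fp lam by simp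
  hence "0 < log_growth lam a lam"
    using fmap_greater_self_iff lam by simp
  with assms show False
    by (simp add: log_growth_def algebra_simps)
qed

lemma fmap_maps_fp_interval:
  assumes "a \<le> lam - (lam - 1) * ln lam" "u \<in> {allee_fp lam a..upper_fp lam a}"
  shows "fmap lam a u \<in> {allee_fp lam a..upper_fp lam a}"
proof -
  have "upper_fp lam a \<le> lam"
    using assms upper_fp_le by auto
  hence "fmap lam a (allee_fp lam a) \<le> fmap lam a u" "fmap lam a u \<le> fmap lam a (upper_fp lam a)"
    using assms allee_fp(1) by (auto intro!: fmap_mono)
  thus ?thesis
    using allee_fp upper_fp by simp
qed

end

lemma iterate_tendsto_zero:
  fixes Z :: "nat \<Rightarrow> real" and F :: "real \<Rightarrow> real"
  assumes step: "\<And>k. Z (Suc k) = F (Z k)" and Z0: "0 \<le> Z 0" "Z 0 < B"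
    and F_nonneg: "\<And>z. 0 \<le> z \<Longrightarrow> 0 \<le> F z" and F_zero: "F 0 = 0"
    and F_less: "\<And>z. 0 < z \<Longrightarrow> z < B \<Longrightarrow> F z < z"
    and F_cont: "\<And>z. 0 < z \<Longrightarrow> isCont F z"
  shows "Z \<longlonglongrightarrow> 0"
proof -
  have F_le: "F z \<le> z" if "0 \<le> z" "z < B" for z
    using F_less[of z] F_zero that by (cases "z = 0") auto
  have Z_bounds: "0 \<le> Z k \<and> Z k < B" for k
  proof (induction k)
    case (Suc k)
    thus ?case
      using step[of k] F_nonneg[of "Z k"] F_le[of "Z k"] by auto
  qed (use Z0 in auto)
  have "decseq Z"
  proof (rule decseq_SucI)
    show "Z (Suc k) \<le> Z k" for k
      using step[of k] F_le[of "Z k"] Z_bounds[of k] by simp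
  qed
  then obtain L where L: "Z \<longlonglongrightarrow> L" "\<And>k. L \<le> Z k"
    using decseq_convergent[of Z 0] Z_bounds by blast
  have "0 \<le> L"
    using Z_bounds by (intro LIMSEQ_le_const[OF L(1)]) auto
  have "L < B"
    using L(2)[of 0] Z_bounds[of 0] by linarith
  show ?thesis
  proof (cases "L = 0")
    case False
    with \<open>0 \<le> L\<close> have "0 < L" by simp
    have "(\<lambda>k. F (Z k)) \<longlonglongrightarrow> L"
      using LIMSEQ_Suc[OF L(1)] step by simp
    moreover have "(\<lambda>k. F (Z k)) \<longlonglongrightarrow> F L"
      using isCont_tendsto_compose[OF F_cont[OF \<open>0 < L\<close>] L(1)] .
    ultimately have "F L = L"
      using LIMSEQ_unique by blast
    with F_less[OF \<open>0 < L\<close> \<open>L < B\<close>] show ?thesis by simp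
  qed (use L in simp)
qed

lemma LIMSEQ_even_odd:
  fixes X :: "nat \<Rightarrow> 'a::metric_space"
  assumes "(\<lambda>k. X (2 * k)) \<longlonglongrightarrow> L" "(\<lambda>k. X (2 * k + 1)) \<longlonglongrightarrow> L"
  shows "X \<longlonglongrightarrow> L"
  unfolding lim_sequentially
proof (intro allI impI)
  fix e :: real assume "0 < e"
  then obtain N1 N2 where N1: "\<And>k. k \<ge> N1 \<Longrightarrow> dist (X (2 * k)) L < e"
    and N2: "\<And>k. k \<ge> N2 \<Longrightarrow> dist (X (2 * k + 1)) L < e"
    using assms unfolding lim_sequentially by meson
  have "dist (X n) L < e" if "2 * (N1 + N2) \<le> n" for n
  proof (cases "even n")
    case True
    with N1[of "n div 2"] that show ?thesis by auto
  next
    case False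
    with N2[of "n div 2"] that show ?thesis by (auto elim: oddE)
  qed
  thus "\<exists>N. \<forall>n\<ge>N. dist (X n) L < e" by blast
qed

lemma two_step_iterate_tendsto_zero:
  fixes X :: "nat \<Rightarrow> real" and F :: "real \<Rightarrow> real"
  assumes step: "\<And>k. X (Suc (Suc k)) = F (X k)"
    and X01: "0 \<le> X 0" "X 0 < B" "0 \<le> X 1" "X 1 < B"
    and "\<And>z. 0 \<le> z \<Longrightarrow> 0 \<le> F z" "F 0 = 0"
    and "\<And>z. 0 < z \<Longrightarrow> z < B \<Longrightarrow> F z < z"
    and "\<And>z. 0 < z \<Longrightarrow> isCont F z"
  shows "X \<longlonglongrightarrow> 0"
proof (rule LIMSEQ_even_odd)
  show "(\<lambda>k. X (2 * k)) \<longlonglongrightarrow> 0"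
  proof (rule iterate_tendsto_zero[where F = F and B = B])
    show "X (2 * Suc k) = F (X (2 * k))" for k
      using step[of "2 * k"] by simp
  qed (use assms in auto)
  show "(\<lambda>k. X (2 * k + 1)) \<longlonglongrightarrow> 0"
  proof (rule iterate_tendsto_zero[where F = F and B = B])
    show "X (2 * Suc k + 1) = F (X (2 * k + 1))" for k
      using step[of "2 * k + 1"] by simp
  qed (use assms in auto)
qed

lemma orbit_fst_Suc: "fst (orbit lam s r x0 y0 (Suc n)) = s * snd (orbit lam s r x0 y0 n)"
  by (simp add: Let_def)

text \<open>The factor s of the first component is absorbed into the exponent: a = r + ln s.\<close>
lemma orbit_fst_Suc_Suc:
  assumes "0 < s"
  shows "fst (orbit lam s r x0 y0 (Suc (Suc n))) = fmap lam (r + ln s) (fst (orbit lam s r x0 y0 n))"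
  using assms by (simp add: Let_def fmap_def exp_add exp_diff)

lemma orbit_tendsto_zero_iff:
  assumes "0 < s"
  shows "orbit lam s r x0 y0 \<longlonglongrightarrow> (0, 0) \<longleftrightarrow> (\<lambda>n. fst (orbit lam s r x0 y0 n)) \<longlonglongrightarrow> 0"
proof
  assume "orbit lam s r x0 y0 \<longlonglongrightarrow> (0, 0)"
  from tendsto_fst[OF this] show "(\<lambda>n. fst (orbit lam s r x0 y0 n)) \<longlonglongrightarrow> 0" by simp
next
  assume X: "(\<lambda>n. fst (orbit lam s r x0 y0 n)) \<longlonglongrightarrow> 0"
  have "(\<lambda>n. fst (orbit lam s r x0 y0 (Suc n)) / s) \<longlonglongrightarrow> 0 / s"
    using LIMSEQ_Suc[OF X] by (intro tendsto_divide) (use assms in auto)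
  hence "(\<lambda>n. snd (orbit lam s r x0 y0 n)) \<longlonglongrightarrow> 0"
    using assms by (simp only: orbit_fst_Suc) simp
  from tendsto_Pair[OF X this] show "orbit lam s r x0 y0 \<longlonglongrightarrow> (0, 0)" by simp
qed

lemma orbit_tendsto_zero:
  assumes s: "0 < s" and "0 \<le> x0" "x0 < B" "0 \<le> s * y0" "s * y0 < B"
    and "\<And>z. 0 < z \<Longrightarrow> z < B \<Longrightarrow> fmap lam (r + ln s) z < z"
  shows "orbit lam s r x0 y0 \<longlonglongrightarrow> (0, 0)"
  unfolding orbit_tendsto_zero_iff[OF s]
proof (rule two_step_iterate_tendsto_zero[where F = "fmap lam (r + ln s)" and B = B])
  show "fst (orbit lam s r x0 y0 (Suc (Suc k))) = fmap lam (r + ln s) (fst (orbit lam s r x0 y0 k))" for k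
    by (rule orbit_fst_Suc_Suc[OF s])
qed (use assms in \<open>auto simp: Let_def fmap_nonneg isCont_fmap\<close>)

lemma orbit_not_tendsto_zero:
  assumes s: "0 < s" and c: "0 < c" "S \<subseteq> {c..}"
    and S_invariant: "\<And>z. z \<in> S \<Longrightarrow> fmap lam (r + ln s) z \<in> S"
    and start: "x0 \<in> S \<or> s * y0 \<in> S"
  shows "\<not> orbit lam s r x0 y0 \<longlonglongrightarrow> (0, 0)"
proof
  obtain j where j: "fst (orbit lam s r x0 y0 j) \<in> S"
    using start orbit_fst_Suc[of lam s r x0 y0 0] by (metis fst_conv orbit.simps(1) snd_conv)
  have in_S: "fst (orbit lam s r x0 y0 (2 * k + j)) \<in> S" for k
  proof (induction k)
    case (Suc k)
    thus ?case
      using S_invariant orbit_fst_Suc_Suc[OF s, of lam r x0 y0 "2 * k + j"] by simp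
  qed (use j in simp)
  assume "orbit lam s r x0 y0 \<longlonglongrightarrow> (0, 0)"
  hence "eventually (\<lambda>n. fst (orbit lam s r x0 y0 n) < c) sequentially"
    using c by (intro order_tendstoD) (simp_all add: orbit_tendsto_zero_iff[OF s])
  then obtain N where "\<And>n. n \<ge> N \<Longrightarrow> fst (orbit lam s r x0 y0 n) < c"
    by (auto simp: eventually_sequentially)
  hence "fst (orbit lam s r x0 y0 (2 * N + j)) < c" by simp
  with in_S[of N] c show False by auto
qed

lemma scal_tendsto_zero:
  assumes "0 \<le> x0" "x0 < B" "0 \<le> x1" "x1 < B"
    and "\<And>z. 0 < z \<Longrightarrow> z < B \<Longrightarrow> fmap lam a z < z"
  shows "scal lam a x0 x1 \<longlonglongrightarrow> 0"
  by (rule two_step_iterate_tendsto_zero[where F = "fmap lam a" and B = B])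
    (use assms in \<open>auto simp: fmap_nonneg isCont_fmap\<close>)

lemma solves_scalar_const_iff: "solves_scalar lam a (\<lambda>_. x) \<longleftrightarrow> fmap lam a x = x"
  unfolding solves_scalar_def by (metis order_refl)

lemma solves_scalar_alternating:
  assumes "fmap lam a p = p" "fmap lam a q = q"
  shows "solves_scalar lam a (\<lambda>n. if even n then p else q)"
  unfolding solves_scalar_def
proof (intro allI impI)
  fix n :: nat assume "n \<ge> 1"
  hence "even (n + 1) \<longleftrightarrow> even (n - 1)" by (cases n) auto
  thus "(if even (n + 1) then p else q) = fmap lam a (if even (n - 1) then p else q)"
    using assms by simp
qed

lemma orbits_tendsto_zero_iff_below_threshold:
  assumes lam: "lam > 1" and s: "0 < s" and a: "a = r + ln s"
  shows "(\<forall>x0 y0. x0 \<ge> 0 \<longrightarrow> y0 \<ge> 0 \<longrightarrow> orbit lam s r x0 y0 \<longlonglongrightarrow> (0, 0))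
    \<longleftrightarrow> a < (lam - 1) * (1 - ln (lam - 1))"
proof
  assume all: "\<forall>x0 y0. x0 \<ge> 0 \<longrightarrow> y0 \<ge> 0 \<longrightarrow> orbit lam s r x0 y0 \<longlonglongrightarrow> (0, 0)"
  show "a < (lam - 1) * (1 - ln (lam - 1))"
  proof (rule ccontr)
    assume "\<not> a < (lam - 1) * (1 - ln (lam - 1))"
    then obtain p where p: "0 < p" "log_growth lam a p = 0"
      using log_growth_root_below_peak[OF lam] by (metis log_growth_at_peak diff_ge_0_iff_ge not_less)
    hence "\<not> orbit lam s r p (p / s) \<longlonglongrightarrow> (0, 0)"
      using s a fmap_eq_self_iff[of p] by (intro orbit_not_tendsto_zero[where S = "{p}" and c = p]) auto
    with all p s show False by auto
  qed
next
  assume below: "a < (lam - 1) * (1 - ln (lam - 1))"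
  have below_diagonal: "fmap lam a z < z" if "0 < z" for z
    using log_growth_le_peak[OF lam that, of a] below that
    by (simp add: fmap_less_self_iff log_growth_at_peak)
  show "\<forall>x0 y0. x0 \<ge> 0 \<longrightarrow> y0 \<ge> 0 \<longrightarrow> orbit lam s r x0 y0 \<longlonglongrightarrow> (0, 0)"
  proof (intro allI impI)
    fix x0 y0 :: real assume "0 \<le> x0" "0 \<le> y0"
    with s a below_diagonal show "orbit lam s r x0 y0 \<longlonglongrightarrow> (0, 0)"
      by (intro orbit_tendsto_zero[where B = "max x0 (s * y0) + 1"]) auto
  qed
qed

context allee_regime
begin

lemma orbit_tendsto_zero_below_allee_fp:
  assumes s: "0 < s" and a: "a = r + ln s"
    and "0 \<le> x0" "x0 < allee_fp lam a" "0 \<le> y0" "y0 < allee_fp lam a / s"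
  shows "orbit lam s r x0 y0 \<longlonglongrightarrow> (0, 0)"
  using assms fmap_less_self_below_allee_fp
  by (intro orbit_tendsto_zero[where B = "allee_fp lam a"]) (auto simp: less_divide_eq mult.commute)

lemma orbit_not_tendsto_zero_from_fp_interval:
  assumes "0 < s" "a = r + ln s" "a \<le> lam - (lam - 1) * ln lam"
    and "x0 \<in> {allee_fp lam a..upper_fp lam a} \<or> s * y0 \<in> {allee_fp lam a..upper_fp lam a}"
  shows "\<not> orbit lam s r x0 y0 \<longlonglongrightarrow> (0, 0)"
  using assms allee_fp(1) fmap_maps_fp_interval
  by (intro orbit_not_tendsto_zero[where S = "{allee_fp lam a..upper_fp lam a}" and c = "allee_fp lam a"])
    auto

lemma alternating_allee_solutions:
  "solves_scalar lam a (\<lambda>n. if even n then 0 else allee_fp lam a)"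
  "solves_scalar lam a (\<lambda>n. if even n then allee_fp lam a else 0)"
  using allee_fp(3) by (simp_all add: solves_scalar_alternating)

text \<open>Instability of the alternating solutions: lowering u* slightly sends the solution to 0.\<close>
lemma scal_tendsto_zero_near_alternating:
  assumes "0 < \<delta>"
  shows "\<exists>x0 x1. 0 \<le> x0 \<and> 0 \<le> x1 \<and> dist (x0, x1) (0, allee_fp lam a) < \<delta> \<and> scal lam a x0 x1 \<longlonglongrightarrow> 0"
    and "\<exists>x0 x1. 0 \<le> x0 \<and> 0 \<le> x1 \<and> dist (x0, x1) (allee_fp lam a, 0) < \<delta> \<and> scal lam a x0 x1 \<longlonglongrightarrow> 0"
proof -
  define v where "v = max 0 (allee_fp lam a - \<delta> / 2)"
  have v: "0 \<le> v" "v < allee_fp lam a" "dist v (allee_fp lam a) < \<delta>"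
    using assms allee_fp(1) by (auto simp: v_def dist_real_def)
  have "scal lam a 0 v \<longlonglongrightarrow> 0" "scal lam a v 0 \<longlonglongrightarrow> 0"
    using v allee_fp(1) fmap_less_self_below_allee_fp
    by (auto intro!: scal_tendsto_zero[where B = "allee_fp lam a"])
  moreover have "dist (0, v) (0, allee_fp lam a) < \<delta>" "dist (v, 0) (allee_fp lam a, 0) < \<delta>"
    using v by (simp_all add: dist_Pair_Pair)
  ultimately show "\<exists>x0 x1. 0 \<le> x0 \<and> 0 \<le> x1 \<and> dist (x0, x1) (0, allee_fp lam a) < \<delta> \<and> scal lam a x0 x1 \<longlonglongrightarrow> 0"
    and "\<exists>x0 x1. 0 \<le> x0 \<and> 0 \<le> x1 \<and> dist (x0, x1) (allee_fp lam a, 0) < \<delta> \<and> scal lam a x0 x1 \<longlonglongrightarrow> 0"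
    using v(1) by blast+
qed

end

theorem mainTheorem6:
  fixes lam s r a :: real
  assumes lam: "lam > 1" and s: "0 < s" "s \<le> 1"
    and a_def: "a = r + ln s"
  shows
    "((\<forall>x0 y0. x0 \<ge> 0 \<longrightarrow> y0 \<ge> 0 \<longrightarrow> (orbit lam s r x0 y0 \<longlonglongrightarrow> (0, 0)))
        \<longleftrightarrow> a < (lam - 1) * (1 - ln (lam - 1)))
   \<and> (a > (lam - 1) * (1 - ln (lam - 1)) \<longrightarrow>
        allee_fp lam a < upper_fp lam a
      \<and> {x. x > 0 \<and> solves_scalar lam a (\<lambda>_. x)} = {allee_fp lam a, upper_fp lam a}
      \<and> (\<forall>x0 y0. 0 \<le> x0 \<longrightarrow> x0 < allee_fp lam a \<longrightarrow> 0 \<le> y0 \<longrightarrow> y0 < allee_fp lam a / s \<longrightarrow>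
            (orbit lam s r x0 y0 \<longlonglongrightarrow> (0, 0))))
   \<and> ((lam - 1) * (1 - ln (lam - 1)) < a \<and> a \<le> lam - (lam - 1) * ln lam \<longrightarrow>
        (\<forall>x0 y0. 0 \<le> x0 \<longrightarrow> 0 \<le> y0 \<longrightarrow>
           (x0 \<in> {allee_fp lam a..upper_fp lam a} \<or> s * y0 \<in> {allee_fp lam a..upper_fp lam a}) \<longrightarrow>
           \<not> (orbit lam s r x0 y0 \<longlonglongrightarrow> (0, 0))))
   \<and> (a > (lam - 1) * (1 - ln (lam - 1)) \<longrightarrow>
        solves_scalar lam a (\<lambda>n. if even n then 0 else allee_fp lam a)
      \<and> solves_scalar lam a (\<lambda>n. if even n then allee_fp lam a else 0)
      \<and> (\<forall>\<delta>>0. \<exists>x0 x1. 0 \<le> x0 \<and> 0 \<le> x1 \<and> dist (x0, x1) (0, allee_fp lam a) < \<delta>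
                 \<and> (scal lam a x0 x1 \<longlonglongrightarrow> 0))
      \<and> (\<forall>\<delta>>0. \<exists>x0 x1. 0 \<le> x0 \<and> 0 \<le> x1 \<and> dist (x0, x1) (allee_fp lam a, 0) < \<delta>
                 \<and> (scal lam a x0 x1 \<longlonglongrightarrow> 0)))"
proof -
  have regime: "allee_regime lam a" if "(lam - 1) * (1 - ln (lam - 1)) < a"
    using lam that by unfold_locales
  show ?thesis
    using orbits_tendsto_zero_iff_below_threshold[OF lam s(1) a_def]
      allee_regime.allee_fp_less_upper_fp[OF regime]
      allee_regime.positive_fixed_points[OF regime]
      allee_regime.orbit_tendsto_zero_below_allee_fp[OF regime s(1) a_def]
      allee_regime.orbit_not_tendsto_zero_from_fp_interval[OF regime s(1) a_def]
      allee_regime.alternating_allee_solutions[OF regime]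
      allee_regime.scal_tendsto_zero_near_alternating[OF regime]
    by (simp add: solves_scalar_const_iff)
qed

end
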